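(* Consider the following setting. A ReLU neural network with input $x\in\mathbb{R}^{n_x}$ has hidden layers $\hat{x}^{(1)}=\sigma(\bm{W}^{(0)}x+b^{(0)})$, $\hat{x}^{(\ell+1)}=\sigma(\bm{W}^{(\ell)}\hat{x}^{(\ell)}+b^{(\ell)})$ for $\ell=1,\dots,n-1$, and output $y=\bm{W}^{(n)}\hat{x}^{(n)}+b^{(n)}$, where $\sigma(z)=\max(z,0)$ componentwise. Write $z^{(0)}=x$ and $z^{(\ell)}=\hat{x}^{(\ell)}$ for $\ell\ge1$ (the input of layer $\ell$). Let $\beta=(\beta^{(1)},\dots,\beta^{(n)})$ with $\beta^{(\ell)}$ of the same dimension as $\hat{x}^{(\ell)}$, let $\hat{x}=(\hat{x}^{(1)},\dots,\hat{x}^{(n)})$, and let $u=(x,\hat{x},\beta)\in\mathbb{R}^{t}$. Fix diagonal constant matrices $\bm{M}^{\min,(\ell)},\bm{M}^{\max,(\ell)}$, a matrix $\bm{A}_x$ and vector $b_x$, a vector $p$, a symmetric matrix $\bm{M}_i$, and the $i$-th standard basis vector $s_i$. Let $\bm{A}u-b\ge0$ denote the aggregate of the linear constraints: (a) $\bm{A}_x x-b_x\ge0$; (b) $0\le\beta\le 1$; (c) for each $\ell=1,\dots,n$: $\hat{x}^{(\ell)}\ge \bm{W}^{(\ell-1)}z^{(\ell-1)}+b^{(\ell-1)}$, $\hat{x}^{(\ell)}\ge0$, $\hat{x}^{(\ell)}\le \bm{W}^{(\ell-1)}z^{(\ell-1)}+b^{(\ell-1)}-\bm{M}^{\min,(\ell)}(\mathbf{1}-\beta^{(\ell)})$,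 $\hat{x}^{(\ell)}\le \bm{M}^{\max,(\ell)}\beta^{(\ell)}$; (d) $\bm{W}^{(n)}\hat{x}^{(n)}+b^{(n)}-p\ge0$; here $\bm{A}\in\mathbb{R}^{N\times t}$. The MIQP value is $$e_i^{\star}=\sup\{\,x^{T}\bm{M}_i x-s_i^{T}(\bm{W}^{(n)}\hat{x}^{(n)}+b^{(n)}) : \bm{A}u-b\ge0,\ \beta\in\{0,1\}^{d}\,\}.$$ For a subset $\mathcal{S}_c\subseteq\mathcal{S}=\{1,\dots,N\}^2$, let $\tilde{e}_i^{\star}(\mathcal{S}_c)$ be the optimal value (supremum) of the following SDP over symmetric matrices $$\hat{\bm{\Gamma}}=\begin{bmatrix}1 & x^{T} & \hat{x}^{T} & \beta^{T}\\ x & \bm{X} & \bm{\epsilon} & \bm{\gamma}\\ \hat{x} & \bm{\epsilon}^{T} & \bm{\eta} & \bm{\delta}\\ \beta & \bm{\gamma}^{T} & \bm{\delta}^{T} & \bm{B}\end{bmatrix}\succeq0,\qquad \bm{\Gamma}=\text{lower-right }t\times t\text{ block},$$ maximizing $\operatorname{tr}(\bm{M}_i\bm{X})-s_i^{T}(\bm{W}^{(n)}\hat{x}^{(n)}+b^{(n)})$ subject to: $\bm{A}u-b\ge0$; $\bm{\Omega}(\bm{\Gamma},u)_{j,k}\ge0$ for all $(j,k)\in\mathcal{S}_c$, where $\bm{\Omega}(\bm{\Gamma},u)=\bm{A}\bm{\Gamma}\bm{A}^{T}-\bm{A}ub^{T}-bu^{T}\bm{A}^{T}+bb^{T}$; $\operatorname{diag}(\bm{B})=\beta$;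 $\operatorname{diag}(\bm{\delta})=\hat{x}$ (i.e. the entry of $\hat{\bm\Gamma}$ in the row of $\hat{x}_k$ and column of the binary $\beta_k$ paired with the same neuron equals $\hat{x}_k$); and for every layer $\ell$ and neuron $k$, the entry of $\hat{\bm\Gamma}$ indexed by $(\hat{x}^{(\ell)}_k,\hat{x}^{(\ell)}_k)$ equals $\sum_j \bm{W}^{(\ell-1)}_{k,j}\,[\hat{\bm\Gamma}]_{(\hat{x}^{(\ell)}_k,\, z^{(\ell-1)}_j)}+b^{(\ell-1)}_k\hat{x}^{(\ell)}_k$. The Sequential Targeted Tightening algorithm produces nested index sets $\mathcal{S}_{c,[0]}\subseteq\mathcal{S}_{c,[1]}\subseteq\cdots$ (at each iteration, adding to the current set some indices $(j,k)$ at which the current SDP solution has $\bm\Omega_{j,k}<0$), and the performance guarantee at iteration $j$ is $\tilde{e}_{i,[j]}^{\star}=\tilde{e}_i^{\star}(\mathcal{S}_{c,[j]})$. Then for every iteration $j>0$, $$\tilde{e}_{i,[j-1]}^{\star}\ \ge\ \tilde{e}_{i,[j]}^{\star}\ \ge\ e_i^{\star}.$$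
   Context: $\succeq0$ denotes positive semidefiniteness; inequalities between vectors/matrices are componentwise; $\mathbf{1}$ is the all-ones vector; $d$ is the total number of binary variables (equal to the total number of hidden neurons). Optimal values are taken in the extended reals. *)

theory Defs
  imports Complex_Main "HOL-Library.Extended_Real"
begin

(* Variables of u = (x, xhat, beta):
   Xv j      : x_j            (j < w 0 = n_x)
   Hv l k    : xhat^(l)_k     (1 <= l <= n, k < w l)
   Bv l k    : beta^(l)_k     (1 <= l <= n, k < w l) *)
datatype var = Xv nat | Hv nat nat | Bv nat nat

(* Rows of the aggregate linear system A u - b >= 0 *)
datatype con =
    CA nat            (* (a)  row r of A_x x - b_x >= 0 *)
  | CBlo nat nat      (* (b)  beta^(l)_k >= 0 *)
  | CBhi nat nat      (* (b)  1 - beta^(l)_k >= 0 *)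
  | C1 nat nat        (* (c)  xhat >= W z + b *)
  | C2 nat nat        (* (c)  xhat >= 0 *)
  | C3 nat nat        (* (c)  xhat <= W z + b - Mmin (1 - beta) *)
  | C4 nat nat        (* (c)  xhat <= Mmax beta *)
  | CD nat            (* (d)  row r of W^(n) xhat^(n) + b^(n) - p >= 0 *)

definition Vars :: "(nat \<Rightarrow> nat) \<Rightarrow> nat \<Rightarrow> var set" where
  "Vars w n = {Xv j | j. j < w 0} \<union> {Hv l k | l k. 1 \<le> l \<and> l \<le> n \<and> k < w l}
              \<union> {Bv l k | l k. 1 \<le> l \<and> l \<le> n \<and> k < w l}"

definition BinVars :: "(nat \<Rightarrow> nat) \<Rightarrow> nat \<Rightarrow> var set" where
  "BinVars w n = {Bv l k | l k. 1 \<le> l \<and> l \<le> n \<and> k < w l}"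

definition Cons :: "(nat \<Rightarrow> nat) \<Rightarrow> nat \<Rightarrow> nat \<Rightarrow> nat \<Rightarrow> con set" where
  "Cons w n mx ny = {CA r | r. r < mx}
     \<union> {CBlo l k | l k. 1 \<le> l \<and> l \<le> n \<and> k < w l}
     \<union> {CBhi l k | l k. 1 \<le> l \<and> l \<le> n \<and> k < w l}
     \<union> {C1 l k | l k. 1 \<le> l \<and> l \<le> n \<and> k < w l}
     \<union> {C2 l k | l k. 1 \<le> l \<and> l \<le> n \<and> k < w l}
     \<union> {C3 l k | l k. 1 \<le> l \<and> l \<le> n \<and> k < w l}
     \<union> {C4 l k | l k. 1 \<le> l \<and> l \<le> n \<and> k < w l}
     \<union> {CD r | r. r < ny}"

definition ind :: "var \<Rightarrow> var \<Rightarrow> real" where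
  "ind a v = (if v = a then 1 else 0)"

definition zv :: "nat \<Rightarrow> nat \<Rightarrow> var" where
  "zv l j = (if l = 0 then Xv j else Hv l j)"

definition acoef ::
  "(nat \<Rightarrow> nat) \<Rightarrow> nat \<Rightarrow> (nat \<Rightarrow> nat \<Rightarrow> nat \<Rightarrow> real) \<Rightarrow> (nat \<Rightarrow> nat \<Rightarrow> real)
   \<Rightarrow> (nat \<Rightarrow> nat \<Rightarrow> real) \<Rightarrow> (nat \<Rightarrow> nat \<Rightarrow> real) \<Rightarrow> con \<Rightarrow> var \<Rightarrow> real" where
  "acoef w n W Ax Mmin Mmax c v = (case c of
      CA r \<Rightarrow> (\<Sum>j<w 0. Ax r j * ind (Xv j) v)
    | CBlo l k \<Rightarrow> ind (Bv l k) v
    | CBhi l k \<Rightarrow> - ind (Bv l k) v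
    | C1 l k \<Rightarrow> ind (Hv l k) v - (\<Sum>j<w (l-1). W (l-1) k j * ind (zv (l-1) j) v)
    | C2 l k \<Rightarrow> ind (Hv l k) v
    | C3 l k \<Rightarrow> (\<Sum>j<w (l-1). W (l-1) k j * ind (zv (l-1) j) v)
                 + Mmin l k * ind (Bv l k) v - ind (Hv l k) v
    | C4 l k \<Rightarrow> Mmax l k * ind (Bv l k) v - ind (Hv l k) v
    | CD r \<Rightarrow> (\<Sum>j<w n. W n r j * ind (Hv n j) v))"

definition bcoef ::
  "nat \<Rightarrow> (nat \<Rightarrow> nat \<Rightarrow> real) \<Rightarrow> (nat \<Rightarrow> real) \<Rightarrow> (nat \<Rightarrow> nat \<Rightarrow> real)
   \<Rightarrow> (nat \<Rightarrow> real) \<Rightarrow> con \<Rightarrow> real" where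
  "bcoef n b bx Mmin p c = (case c of
      CA r \<Rightarrow> bx r
    | CBlo l k \<Rightarrow> 0
    | CBhi l k \<Rightarrow> -1
    | C1 l k \<Rightarrow> b (l-1) k
    | C2 l k \<Rightarrow> 0
    | C3 l k \<Rightarrow> Mmin l k - b (l-1) k
    | C4 l k \<Rightarrow> 0
    | CD r \<Rightarrow> p r - b n r)"

definition Au ::
  "(nat \<Rightarrow> nat) \<Rightarrow> nat \<Rightarrow> (nat \<Rightarrow> nat \<Rightarrow> nat \<Rightarrow> real) \<Rightarrow> (nat \<Rightarrow> nat \<Rightarrow> real)
   \<Rightarrow> (nat \<Rightarrow> nat \<Rightarrow> real) \<Rightarrow> (nat \<Rightarrow> nat \<Rightarrow> real) \<Rightarrow> con \<Rightarrow> (var \<Rightarrow> real) \<Rightarrow> real" where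
  "Au w n W Ax Mmin Mmax c u = (\<Sum>v\<in>Vars w n. acoef w n W Ax Mmin Mmax c v * u v)"

definition lin_feasible ::
  "(nat \<Rightarrow> nat) \<Rightarrow> nat \<Rightarrow> (nat \<Rightarrow> nat \<Rightarrow> nat \<Rightarrow> real) \<Rightarrow> (nat \<Rightarrow> nat \<Rightarrow> real)
   \<Rightarrow> (nat \<Rightarrow> nat \<Rightarrow> real) \<Rightarrow> (nat \<Rightarrow> real) \<Rightarrow> nat \<Rightarrow> (nat \<Rightarrow> nat \<Rightarrow> real)
   \<Rightarrow> (nat \<Rightarrow> nat \<Rightarrow> real) \<Rightarrow> (nat \<Rightarrow> real) \<Rightarrow> nat \<Rightarrow> (var \<Rightarrow> real) \<Rightarrow> bool" where
  "lin_feasible w n W b Ax bx mx Mmin Mmax p ny u \<longleftrightarrow>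
     (\<forall>c\<in>Cons w n mx ny. Au w n W Ax Mmin Mmax c u - bcoef n b bx Mmin p c \<ge> 0)"

definition Omega ::
  "(nat \<Rightarrow> nat) \<Rightarrow> nat \<Rightarrow> (nat \<Rightarrow> nat \<Rightarrow> nat \<Rightarrow> real) \<Rightarrow> (nat \<Rightarrow> nat \<Rightarrow> real)
   \<Rightarrow> (nat \<Rightarrow> nat \<Rightarrow> real) \<Rightarrow> (nat \<Rightarrow> real) \<Rightarrow> (nat \<Rightarrow> nat \<Rightarrow> real)
   \<Rightarrow> (nat \<Rightarrow> nat \<Rightarrow> real) \<Rightarrow> (nat \<Rightarrow> real)
   \<Rightarrow> (var \<Rightarrow> var \<Rightarrow> real) \<Rightarrow> (var \<Rightarrow> real) \<Rightarrow> con \<Rightarrow> con \<Rightarrow> real" where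
  "Omega w n W b Ax bx Mmin Mmax p G u c d =
     (\<Sum>v\<in>Vars w n. \<Sum>v'\<in>Vars w n.
         acoef w n W Ax Mmin Mmax c v * G v v' * acoef w n W Ax Mmin Mmax d v')
     - Au w n W Ax Mmin Mmax c u * bcoef n b bx Mmin p d
     - bcoef n b bx Mmin p c * Au w n W Ax Mmin Mmax d u
     + bcoef n b bx Mmin p c * bcoef n b bx Mmin p d"

definition psd_on :: "'i set \<Rightarrow> ('i \<Rightarrow> 'i \<Rightarrow> real) \<Rightarrow> bool" where
  "psd_on I M \<longleftrightarrow> (\<forall>i\<in>I. \<forall>j\<in>I. M i j = M j i)
                 \<and> (\<forall>y. 0 \<le> (\<Sum>i\<in>I. \<Sum>j\<in>I. y i * M i j * y j))"

(* Gamma-hat = [1 u^T; u Gamma], row/column None is the leading "1" *)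
definition Ghat :: "(var \<Rightarrow> real) \<Rightarrow> (var \<Rightarrow> var \<Rightarrow> real) \<Rightarrow> var option \<Rightarrow> var option \<Rightarrow> real" where
  "Ghat u G r s = (case (r, s) of
      (None, None) \<Rightarrow> 1
    | (None, Some v) \<Rightarrow> u v
    | (Some v, None) \<Rightarrow> u v
    | (Some v, Some v') \<Rightarrow> G v v')"

definition miqp_obj ::
  "(nat \<Rightarrow> nat) \<Rightarrow> nat \<Rightarrow> (nat \<Rightarrow> nat \<Rightarrow> nat \<Rightarrow> real) \<Rightarrow> (nat \<Rightarrow> nat \<Rightarrow> real)
   \<Rightarrow> (nat \<Rightarrow> nat \<Rightarrow> real) \<Rightarrow> nat \<Rightarrow> (var \<Rightarrow> real) \<Rightarrow> real" where
  "miqp_obj w n W b M i u =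
     (\<Sum>j<w 0. \<Sum>k<w 0. u (Xv j) * M j k * u (Xv k))
     - ((\<Sum>j<w n. W n i j * u (Hv n j)) + b n i)"

definition sdp_obj ::
  "(nat \<Rightarrow> nat) \<Rightarrow> nat \<Rightarrow> (nat \<Rightarrow> nat \<Rightarrow> nat \<Rightarrow> real) \<Rightarrow> (nat \<Rightarrow> nat \<Rightarrow> real)
   \<Rightarrow> (nat \<Rightarrow> nat \<Rightarrow> real) \<Rightarrow> nat \<Rightarrow> (var \<Rightarrow> var \<Rightarrow> real) \<Rightarrow> (var \<Rightarrow> real) \<Rightarrow> real" where
  "sdp_obj w n W b M i G u =
     (\<Sum>j<w 0. \<Sum>k<w 0. M j k * G (Xv k) (Xv j))
     - ((\<Sum>j<w n. W n i j * u (Hv n j)) + b n i)"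

definition e_star ::
  "(nat \<Rightarrow> nat) \<Rightarrow> nat \<Rightarrow> (nat \<Rightarrow> nat \<Rightarrow> nat \<Rightarrow> real) \<Rightarrow> (nat \<Rightarrow> nat \<Rightarrow> real)
   \<Rightarrow> (nat \<Rightarrow> nat \<Rightarrow> real) \<Rightarrow> (nat \<Rightarrow> real) \<Rightarrow> nat \<Rightarrow> (nat \<Rightarrow> nat \<Rightarrow> real)
   \<Rightarrow> (nat \<Rightarrow> nat \<Rightarrow> real) \<Rightarrow> (nat \<Rightarrow> real) \<Rightarrow> nat
   \<Rightarrow> (nat \<Rightarrow> nat \<Rightarrow> real) \<Rightarrow> nat \<Rightarrow> ereal" where
  "e_star w n W b Ax bx mx Mmin Mmax p ny M i =
     Sup {ereal (miqp_obj w n W b M i u) | u.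
            lin_feasible w n W b Ax bx mx Mmin Mmax p ny u
            \<and> (\<forall>v\<in>BinVars w n. u v = 0 \<or> u v = 1)}"

definition sdp_feasible ::
  "(nat \<Rightarrow> nat) \<Rightarrow> nat \<Rightarrow> (nat \<Rightarrow> nat \<Rightarrow> nat \<Rightarrow> real) \<Rightarrow> (nat \<Rightarrow> nat \<Rightarrow> real)
   \<Rightarrow> (nat \<Rightarrow> nat \<Rightarrow> real) \<Rightarrow> (nat \<Rightarrow> real) \<Rightarrow> nat \<Rightarrow> (nat \<Rightarrow> nat \<Rightarrow> real)
   \<Rightarrow> (nat \<Rightarrow> nat \<Rightarrow> real) \<Rightarrow> (nat \<Rightarrow> real) \<Rightarrow> nat
   \<Rightarrow> (con \<times> con) set \<Rightarrow> (var \<Rightarrow> var \<Rightarrow> real) \<Rightarrow> (var \<Rightarrow> real) \<Rightarrow> bool" where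
  "sdp_feasible w n W b Ax bx mx Mmin Mmax p ny Sc G u \<longleftrightarrow>
     psd_on (insert None (Some ` Vars w n)) (Ghat u G)
     \<and> lin_feasible w n W b Ax bx mx Mmin Mmax p ny u
     \<and> (\<forall>(c, d)\<in>Sc. 0 \<le> Omega w n W b Ax bx Mmin Mmax p G u c d)
     \<and> (\<forall>l k. 1 \<le> l \<and> l \<le> n \<and> k < w l \<longrightarrow>
            G (Bv l k) (Bv l k) = u (Bv l k)
          \<and> G (Hv l k) (Bv l k) = u (Hv l k)
          \<and> G (Hv l k) (Hv l k) =
              (\<Sum>j<w (l-1). W (l-1) k j * G (Hv l k) (zv (l-1) j)) + b (l-1) k * u (Hv l k))"

definition e_tilde ::
  "(nat \<Rightarrow> nat) \<Rightarrow> nat \<Rightarrow> (nat \<Rightarrow> nat \<Rightarrow> nat \<Rightarrow> real) \<Rightarrow> (nat \<Rightarrow> nat \<Rightarrow> real)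
   \<Rightarrow> (nat \<Rightarrow> nat \<Rightarrow> real) \<Rightarrow> (nat \<Rightarrow> real) \<Rightarrow> nat \<Rightarrow> (nat \<Rightarrow> nat \<Rightarrow> real)
   \<Rightarrow> (nat \<Rightarrow> nat \<Rightarrow> real) \<Rightarrow> (nat \<Rightarrow> real) \<Rightarrow> nat
   \<Rightarrow> (nat \<Rightarrow> nat \<Rightarrow> real) \<Rightarrow> nat \<Rightarrow> (con \<times> con) set \<Rightarrow> ereal" where
  "e_tilde w n W b Ax bx mx Mmin Mmax p ny M i Sc =
     Sup {ereal (sdp_obj w n W b M i G u) | G u.
            sdp_feasible w n W b Ax bx mx Mmin Mmax p ny Sc G u}"

end

theory Submission
  imports Defs
begin

text \<open>
  Every feasible point u of the MIQP lifts to the rank-one matrix [1; u] [1; u]^T, which is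
  feasible for the SDP with any set of cuts and has the same objective value: it is positive
  semidefinite, its Omega is the outer product of the nonnegative slack vector A u - b with itself,
  and the equality constraints on the diagonals hold because a binary beta switches the neuron
  either off (x-hat = 0, from 0 \<le> x-hat \<le> Mmax beta) or on (x-hat = W z + b, from the two
  bounds involving W z + b).  Adding cuts only shrinks the SDP feasible set, so the bounds decrease.
\<close>

definition outer :: "('a \<Rightarrow> real) \<Rightarrow> 'a \<Rightarrow> 'a \<Rightarrow> real" where
  "outer u v v' = u v * u v'"

lemma sum_ind_mult:
  assumes "finite V" "a \<in> V"
  shows "(\<Sum>v\<in>V. c * ind a v * u v) = c * u a"
proof -
  have "(\<Sum>v\<in>V. c * ind a v * u v) = (\<Sum>v\<in>V. if v = a then c * u a else 0)"
    by (rule sum.cong) (auto simp: ind_def)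
  with assms show ?thesis by simp
qed

lemma sum_ind: "finite V \<Longrightarrow> a \<in> V \<Longrightarrow> (\<Sum>v\<in>V. ind a v * u v) = u a"
  using sum_ind_mult[of V a 1] by simp

lemma sum_lincomb_ind:
  assumes "finite V" "\<forall>j<m. f j \<in> V"
  shows "(\<Sum>v\<in>V. (\<Sum>j<m. c j * ind (f j) v) * u v) = (\<Sum>j<m. c j * u (f j))"
proof -
  have "(\<Sum>v\<in>V. (\<Sum>j<m. c j * ind (f j) v) * u v) = (\<Sum>j<m. \<Sum>v\<in>V. c j * ind (f j) v * u v)"
    by (simp add: sum_distrib_right sum.swap[of _ V])
  also have "\<dots> = (\<Sum>j<m. c j * u (f j))"
    using assms by (intro sum.cong) (auto simp: sum_ind_mult)
  finally show ?thesis .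
qed

lemma finite_Vars: "finite (Vars w n)"
proof (rule finite_subset)
  show "Vars w n \<subseteq> Xv ` {..<w 0} \<union> (\<lambda>(l, k). Hv l k) ` (SIGMA l:{1..n}. {..<w l})
        \<union> (\<lambda>(l, k). Bv l k) ` (SIGMA l:{1..n}. {..<w l})"
    unfolding Vars_def by force
qed auto

lemma Hv_in_Vars: "1 \<le> l \<Longrightarrow> l \<le> n \<Longrightarrow> k < w l \<Longrightarrow> Hv l k \<in> Vars w n"
  unfolding Vars_def by auto

lemma Bv_in_Vars: "1 \<le> l \<Longrightarrow> l \<le> n \<Longrightarrow> k < w l \<Longrightarrow> Bv l k \<in> Vars w n"
  unfolding Vars_def by auto

lemma zv_in_Vars: "1 \<le> l \<Longrightarrow> l \<le> n \<Longrightarrow> j < w (l - 1) \<Longrightarrow> zv (l - 1) j \<in> Vars w n"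
  unfolding Vars_def zv_def by auto

lemma relu_rows_in_Cons:
  assumes "1 \<le> l" "l \<le> n" "k < w l"
  shows "C1 l k \<in> Cons w n mx ny" "C2 l k \<in> Cons w n mx ny"
    "C3 l k \<in> Cons w n mx ny" "C4 l k \<in> Cons w n mx ny"
  using assms unfolding Cons_def by auto

lemma Au_relu_rows:
  fixes W :: "nat \<Rightarrow> nat \<Rightarrow> nat \<Rightarrow> real" and u :: "var \<Rightarrow> real"
  assumes "1 \<le> l" "l \<le> n" "k < w l"
  defines "Wz \<equiv> \<Sum>j<w (l - 1). W (l - 1) k j * u (zv (l - 1) j)"
  shows "Au w n W Ax Mmin Mmax (C1 l k) u = u (Hv l k) - Wz"
    and "Au w n W Ax Mmin Mmax (C2 l k) u = u (Hv l k)"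
    and "Au w n W Ax Mmin Mmax (C3 l k) u = Wz + Mmin l k * u (Bv l k) - u (Hv l k)"
    and "Au w n W Ax Mmin Mmax (C4 l k) u = Mmax l k * u (Bv l k) - u (Hv l k)"
proof -
  have H: "Hv l k \<in> Vars w n" and B: "Bv l k \<in> Vars w n"
    using assms by (auto intro: Hv_in_Vars Bv_in_Vars)
  have Z: "(\<Sum>v\<in>Vars w n. (\<Sum>j<w (l - 1). W (l - 1) k j * ind (zv (l - 1) j) v) * u v) = Wz"
    unfolding Wz_def using zv_in_Vars assms(1,2) by (intro sum_lincomb_ind finite_Vars) blast
  note sums = sum_ind[OF finite_Vars H] sum_ind_mult[OF finite_Vars B] Z
  show "Au w n W Ax Mmin Mmax (C1 l k) u = u (Hv l k) - Wz"
    "Au w n W Ax Mmin Mmax (C2 l k) u = u (Hv l k)"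
    "Au w n W Ax Mmin Mmax (C3 l k) u = Wz + Mmin l k * u (Bv l k) - u (Hv l k)"
    "Au w n W Ax Mmin Mmax (C4 l k) u = Mmax l k * u (Bv l k) - u (Hv l k)"
    using sums unfolding Au_def acoef_def
    by (simp_all add: left_diff_distrib distrib_right sum_subtractf sum.distrib)
qed

lemma lin_feasible_relu_bounds:
  fixes W :: "nat \<Rightarrow> nat \<Rightarrow> nat \<Rightarrow> real" and u :: "var \<Rightarrow> real"
  assumes "lin_feasible w n W b Ax bx mx Mmin Mmax p ny u" "1 \<le> l" "l \<le> n" "k < w l"
  defines "s \<equiv> (\<Sum>j<w (l - 1). W (l - 1) k j * u (zv (l - 1) j)) + b (l - 1) k"
  shows "s \<le> u (Hv l k)" "0 \<le> u (Hv l k)"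
    "u (Hv l k) \<le> s - Mmin l k * (1 - u (Bv l k))" "u (Hv l k) \<le> Mmax l k * u (Bv l k)"
proof -
  have row: "0 \<le> Au w n W Ax Mmin Mmax c u - bcoef n b bx Mmin p c"
    if "c \<in> {C1 l k, C2 l k, C3 l k, C4 l k}" for c
    using that assms(1) relu_rows_in_Cons[where w = w, OF assms(2-4)]
    unfolding lin_feasible_def by blast
  note Au = Au_relu_rows[where w = w, OF assms(2-4)]
  show "s \<le> u (Hv l k)"
    using row[of "C1 l k"] Au(1) by (simp add: bcoef_def s_def)
  show "0 \<le> u (Hv l k)"
    using row[of "C2 l k"] Au(2) by (simp add: bcoef_def)
  show "u (Hv l k) \<le> s - Mmin l k * (1 - u (Bv l k))"
    using row[of "C3 l k"] Au(3) by (simp add: bcoef_def s_def algebra_simps)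
  show "u (Hv l k) \<le> Mmax l k * u (Bv l k)"
    using row[of "C4 l k"] Au(4) by (simp add: bcoef_def)
qed

lemma big_M_relu_complementarity:
  fixes h s \<beta> mmin mmax :: real
  assumes "\<beta> = 0 \<or> \<beta> = 1" and "s \<le> h" "0 \<le> h" "h \<le> s - mmin * (1 - \<beta>)" "h \<le> mmax * \<beta>"
  shows "\<beta> * \<beta> = \<beta> \<and> h * \<beta> = h \<and> h * h = h * s"
  using assms by auto

lemma psd_on_Ghat_outer: "psd_on I (Ghat u (outer u))"
proof -
  define f where "f r = (case r of None \<Rightarrow> 1 | Some v \<Rightarrow> u v)" for r
  have Ghat_eq: "Ghat u (outer u) r s = f r * f s" for r s
    unfolding Ghat_def outer_def f_def by (cases r; cases s) simp_all
  have "(\<Sum>r\<in>I. \<Sum>s\<in>I. y r * Ghat u (outer u) r s * y s) = (\<Sum>r\<in>I. y r * f r)\<^sup>2" for y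
    unfolding Ghat_eq power2_eq_square sum_product by (simp add: mult_ac)
  then show ?thesis
    unfolding psd_on_def by (simp add: Ghat_eq mult.commute)
qed

lemma Omega_outer:
  "Omega w n W b Ax bx Mmin Mmax p (outer u) u c d =
   (Au w n W Ax Mmin Mmax c u - bcoef n b bx Mmin p c) * (Au w n W Ax Mmin Mmax d u - bcoef n b bx Mmin p d)"
proof -
  have "(\<Sum>v\<in>Vars w n. \<Sum>v'\<in>Vars w n.
          acoef w n W Ax Mmin Mmax c v * outer u v v' * acoef w n W Ax Mmin Mmax d v')
        = Au w n W Ax Mmin Mmax c u * Au w n W Ax Mmin Mmax d u"
    unfolding Au_def sum_product outer_def by (simp add: mult_ac)
  then show ?thesis
    unfolding Omega_def by (simp add: algebra_simps)
qed

lemma sdp_obj_outer: "sdp_obj w n W b M i (outer u) u = miqp_obj w n W b M i u"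
  unfolding sdp_obj_def miqp_obj_def outer_def by (simp add: mult_ac)

lemma sdp_feasible_outer:
  assumes lin: "lin_feasible w n W b Ax bx mx Mmin Mmax p ny u"
    and bin: "\<forall>v\<in>BinVars w n. u v = 0 \<or> u v = 1"
    and cuts: "Sc \<subseteq> Cons w n mx ny \<times> Cons w n mx ny"
  shows "sdp_feasible w n W b Ax bx mx Mmin Mmax p ny Sc (outer u) u"
proof -
  have omega: "0 \<le> Omega w n W b Ax bx Mmin Mmax p (outer u) u c d" if "(c, d) \<in> Sc" for c d
    using that cuts lin unfolding Omega_outer lin_feasible_def by auto
  have diag: "outer u (Bv l k) (Bv l k) = u (Bv l k)
      \<and> outer u (Hv l k) (Bv l k) = u (Hv l k)
      \<and> outer u (Hv l k) (Hv l k) =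
          (\<Sum>j<w (l - 1). W (l - 1) k j * outer u (Hv l k) (zv (l - 1) j)) + b (l - 1) k * u (Hv l k)"
    if l: "1 \<le> l" "l \<le> n" "k < w l" for l k
  proof -
    have "u (Bv l k) = 0 \<or> u (Bv l k) = 1"
      using bin l unfolding BinVars_def by auto
    from big_M_relu_complementarity[OF this lin_feasible_relu_bounds[OF lin l]]
    show ?thesis
      unfolding outer_def by (simp add: sum_distrib_left distrib_left mult_ac)
  qed
  show ?thesis
    unfolding sdp_feasible_def
  proof (intro conjI psd_on_Ghat_outer lin allI impI)
    show "\<forall>(c, d)\<in>Sc. 0 \<le> Omega w n W b Ax bx Mmin Mmax p (outer u) u c d"
      using omega by blast
  qed (use diag in blast)+
qed

lemma e_tilde_antimono:
  assumes "Sc \<subseteq> Sc'"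
  shows "e_tilde w n W b Ax bx mx Mmin Mmax p ny M i Sc'
         \<le> e_tilde w n W b Ax bx mx Mmin Mmax p ny M i Sc"
  unfolding e_tilde_def
proof (rule Sup_subset_mono, safe)
  fix G u
  assume "sdp_feasible w n W b Ax bx mx Mmin Mmax p ny Sc' G u"
  then have "sdp_feasible w n W b Ax bx mx Mmin Mmax p ny Sc G u"
    using assms unfolding sdp_feasible_def by blast
  then show "\<exists>G' u'. ereal (sdp_obj w n W b M i G u) = ereal (sdp_obj w n W b M i G' u')
      \<and> sdp_feasible w n W b Ax bx mx Mmin Mmax p ny Sc G' u'"
    by blast
qed

lemma e_star_le_e_tilde:
  assumes "Sc \<subseteq> Cons w n mx ny \<times> Cons w n mx ny"
  shows "e_star w n W b Ax bx mx Mmin Mmax p ny M i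
         \<le> e_tilde w n W b Ax bx mx Mmin Mmax p ny M i Sc"
  unfolding e_star_def e_tilde_def
proof (rule Sup_subset_mono, safe)
  fix u
  assume "lin_feasible w n W b Ax bx mx Mmin Mmax p ny u"
    and "\<forall>v\<in>BinVars w n. u v = 0 \<or> u v = 1"
  then have "sdp_feasible w n W b Ax bx mx Mmin Mmax p ny Sc (outer u) u"
    using assms by (rule sdp_feasible_outer)
  then show "\<exists>G u'. ereal (miqp_obj w n W b M i u) = ereal (sdp_obj w n W b M i G u')
      \<and> sdp_feasible w n W b Ax bx mx Mmin Mmax p ny Sc G u'"
    by (metis sdp_obj_outer)
qed

theorem theorem1:
  fixes w :: "nat \<Rightarrow> nat" and n :: nat
    and W :: "nat \<Rightarrow> nat \<Rightarrow> nat \<Rightarrow> real" and b :: "nat \<Rightarrow> nat \<Rightarrow> real"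
    and Ax :: "nat \<Rightarrow> nat \<Rightarrow> real" and bx :: "nat \<Rightarrow> real" and mx :: nat
    and Mmin Mmax :: "nat \<Rightarrow> nat \<Rightarrow> real" and p :: "nat \<Rightarrow> real" and ny :: nat
    and M :: "nat \<Rightarrow> nat \<Rightarrow> real" and i :: nat
    and Sc :: "nat \<Rightarrow> (con \<times> con) set" and j :: nat
  assumes "1 \<le> n"
    and "i < ny"
    and "\<forall>a c. a < w 0 \<longrightarrow> c < w 0 \<longrightarrow> M a c = M c a"
    and "\<forall>m. Sc m \<subseteq> Cons w n mx ny \<times> Cons w n mx ny"
    and "\<forall>m. Sc m \<subseteq> Sc (Suc m)"
    and "\<forall>m. \<forall>cd \<in> Sc (Suc m) - Sc m. \<exists>G u.
            sdp_feasible w n W b Ax bx mx Mmin Mmax p ny (Sc m) G u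
          \<and> ereal (sdp_obj w n W b M i G u) = e_tilde w n W b Ax bx mx Mmin Mmax p ny M i (Sc m)
          \<and> Omega w n W b Ax bx Mmin Mmax p G u (fst cd) (snd cd) < 0"
    and "0 < j"
  shows "e_tilde w n W b Ax bx mx Mmin Mmax p ny M i (Sc (j - 1))
           \<ge> e_tilde w n W b Ax bx mx Mmin Mmax p ny M i (Sc j)
       \<and> e_tilde w n W b Ax bx mx Mmin Mmax p ny M i (Sc j)
           \<ge> e_star w n W b Ax bx mx Mmin Mmax p ny M i"
proof
  \<comment> \<open>Only the nesting of the cut sets matters; which violated cuts the algorithm adds is irrelevant.\<close>
  have "Sc (j - 1) \<subseteq> Sc j"
    using assms(5)[rule_format, of "j - 1"] assms(7) by simp
  then show "e_tilde w n W b Ax bx mx Mmin Mmax p ny M i (Sc (j - 1))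
      \<ge> e_tilde w n W b Ax bx mx Mmin Mmax p ny M i (Sc j)"
    by (rule e_tilde_antimono)
  show "e_tilde w n W b Ax bx mx Mmin Mmax p ny M i (Sc j)
      \<ge> e_star w n W b Ax bx mx Mmin Mmax p ny M i"
    using assms(4) by (intro e_star_le_e_tilde) blast
qed

end
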